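(* Fix $\mu > 0$. Consider the following probabilistic model of distributed computation of $\mathbf{A}\mathbf{x}$ for $\mathbf{A} \in \mathbb{R}^{M\times N}$, $\mathbf{x}\in\mathbb{R}^N$, using $P$ processors. The time for a processor to compute a dot product of length $\ell$ is a random variable $T$ with $\Pr(T \le t) = 1 - \exp(-\mu(t/\ell - 1))$ for $t \ge \ell$ and $\Pr(T\le t)=0$ for $t<\ell$; the times of different processors are independent. The strategies are: (Uncoded) the $M$ rows are distributed among the $P$ processors, row $i$ being split into $P_i \in \{\lfloor P/M\rfloor, \lceil P/M\rceil\}$ blocks ($\sum_i P_i = P$), each processor computing one block (a dot product of length $N/P_i$); the computation finishes when all $P$ processors finish. (Repetition) each row is assigned to $P_i \in \{\lfloor P/M\rfloor, \lceil P/M\rceil\}$ processors ($\sum_i P_i=P$), each computing a full dot product of length $N$; the computation finishes when for every row at least one of its processors has finished. (MDS) each processor computes a dot product of length $N$; the computation finishes when any $M$ of the $P$ processors finish. (Short-Dot with parameter $K$) each processor computes a dot product of length $s = \frac{N}{P}(P-K+M)$; the computation finishes when any $K$ of the $P$ processors finish. Let $T_{UC}, T_{Rep}, T_{MDS}, T_{SD}$ denote the corresponding completion times. Suppose $M = M(P)$ scales as $P/\log P$ as $P \to \infty$, and Short-Dot is used with $K = P - M/2$. Then $\mathbb{E}[T_{SD}]/N = O\!\left(\frac{\log\log P}{\log P}\right)$, which tends to $0$ as $P\to\infty$, whereas $\mathbb{E}[T_{MDS}]/N$, $\mathbb{E}[T_{Rep}]/N$ and $\mathbb{E}[T_{UC}]/N$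 are all $\Omega(1)$, and so do not tend to $0$ as $P \to \infty$.
   Context: Asymptotic notation refers to $P \to \infty$ with $\mu$ fixed, uniformly in $N$. "$M$ scales as $P/\log P$" means $M(P) = \Theta(P/\log P)$; $M$ is taken to be an even positive integer so that $K = P - M/2$ is an integer (and $K > M$ holds for large $P$). $N$ is assumed divisible by the relevant block sizes so that dot-product lengths are integers. *)

theory Defs
  imports "HOL-Probability.Probability" "HOL-Library.Landau_Symbols"
begin

definition sexp_cdf :: "real \<Rightarrow> real \<Rightarrow> real \<Rightarrow> real" where
  "sexp_cdf mu l t = (if t < l then 0 else 1 - exp (- mu * (t / l - 1)))"

definition sexp_time :: "real \<Rightarrow> real \<Rightarrow> real measure" where
  "sexp_time mu l = interval_measure (sexp_cdf mu l)"

definition proc_space :: "real \<Rightarrow> (nat \<Rightarrow> real) \<Rightarrow> nat \<Rightarrow> (nat \<Rightarrow> real) measure" where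
  "proc_space mu len P = PiM {..<P} (\<lambda>p. sexp_time mu (len p))"

text \<open>k-th smallest (k \<ge> 1) of the times of processors 0..P-1: the time at which
  k processors have finished.\<close>
definition kth_smallest :: "nat \<Rightarrow> nat \<Rightarrow> (nat \<Rightarrow> real) \<Rightarrow> real" where
  "kth_smallest k P \<omega> = sort (map \<omega> [0..<P]) ! (k - 1)"

definition row_count :: "nat \<Rightarrow> (nat \<Rightarrow> nat) \<Rightarrow> nat \<Rightarrow> nat" where
  "row_count P asg i = card {p. p < P \<and> asg p = i}"

text \<open>Valid assignment of the P processors to the M rows: row i receives
  P_i \<in> {floor(P/M), ceil(P/M)} processors (then automatically sum P_i = P).\<close>
definition valid_rows :: "nat \<Rightarrow> nat \<Rightarrow> (nat \<Rightarrow> nat) \<Rightarrow> bool" where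
  "valid_rows M P asg \<longleftrightarrow> (\<forall>p<P. asg p < M) \<and>
     (\<forall>i<M. row_count P asg i \<in> {nat \<lfloor>real P / real M\<rfloor>, nat \<lceil>real P / real M\<rceil>})"

definition E_UC :: "real \<Rightarrow> nat \<Rightarrow> nat \<Rightarrow> (nat \<Rightarrow> nat) \<Rightarrow> real" where
  "E_UC mu P N asg =
     integral\<^sup>L (proc_space mu (\<lambda>p. real N / real (row_count P asg (asg p))) P)
       (\<lambda>\<omega>. Max (\<omega> ` {..<P}))"

definition E_Rep :: "real \<Rightarrow> nat \<Rightarrow> nat \<Rightarrow> nat \<Rightarrow> (nat \<Rightarrow> nat) \<Rightarrow> real" where
  "E_Rep mu M P N asg =
     integral\<^sup>L (proc_space mu (\<lambda>p. real N) P)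
       (\<lambda>\<omega>. Max ((\<lambda>i. Min (\<omega> ` {p. p < P \<and> asg p = i})) ` {..<M}))"

definition E_MDS :: "real \<Rightarrow> nat \<Rightarrow> nat \<Rightarrow> nat \<Rightarrow> real" where
  "E_MDS mu M P N = integral\<^sup>L (proc_space mu (\<lambda>p. real N) P) (kth_smallest M P)"

definition E_SD :: "real \<Rightarrow> nat \<Rightarrow> nat \<Rightarrow> nat \<Rightarrow> nat \<Rightarrow> real" where
  "E_SD mu M K P N =
     integral\<^sup>L (proc_space mu (\<lambda>p. real N / real P * (real P - real K + real M)) P)
       (kth_smallest K P)"

end

theory Submission
  imports Defs
begin

text \<open>
  All four completion times are order statistics of independent shifted exponential
  times.  For Short-Dot, at least \<open>P - K + 1\<close> processors are no faster than the
  \<open>K\<close>-th one, so the \<open>K\<close>-th time exceeds a threshold \<open>t = s (1 + a/\<mu>)\<close> by at most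
  \<open>1/(P - K + 1)\<close> times the total excess of all processors over \<open>t\<close>; each excess has
  mean at most \<open>2 (s/\<mu>) e\<^sup>-\<^sup>a\<close>.  With \<open>P - K + 1 = M/2 + 1\<close> and \<open>e\<^sup>-\<^sup>a = (M/2 + 1)/P\<close>
  this gives \<open>E[T_SD] \<le> s (1 + (a + 2)/\<mu>)\<close>, where \<open>s = 3NM/(2P) = O(N / log P)\<close> and
  \<open>a = O(log log P)\<close>.  For MDS and Repetition the completion time is one of the
  processor times, each at least \<open>N\<close>.  For the uncoded strategy every block has length
  at least \<open>\<ell> = NM/(2P)\<close>, and with probability at least \<open>1/2\<close> some processor exceeds
  \<open>\<ell> (1 + log P / \<mu>)\<close>, so \<open>E[T_UC] \<ge> \<ell> log P / (2\<mu>) = \<Omega>(N)\<close>.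
\<close>

section \<open>Order statistics\<close>

lemma sorted_nth_le_iff_card:
  fixes xs :: "'a::linorder list"
  assumes "sorted xs" "1 \<le> k" "k \<le> length xs"
  shows "xs ! (k - 1) \<le> t \<longleftrightarrow> k \<le> card {i. i < length xs \<and> xs ! i \<le> t}"
proof
  assume kth: "xs ! (k - 1) \<le> t"
  have "xs ! i \<le> t" if "i < k" for i
  proof -
    have "i \<le> k - 1" "k - 1 < length xs" using that assms by auto
    then show ?thesis using sorted_nth_mono[OF assms(1)] kth order_trans by blast
  qed
  then have "{..<k} \<subseteq> {i. i < length xs \<and> xs ! i \<le> t}"
    using assms by auto
  from card_mono[OF _ this] show "k \<le> card {i. i < length xs \<and> xs ! i \<le> t}"
    by simp
next
  assume k: "k \<le> card {i. i < length xs \<and> xs ! i \<le> t}"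
  show "xs ! (k - 1) \<le> t"
  proof (rule ccontr)
    assume "\<not> xs ! (k - 1) \<le> t"
    then have "{i. i < length xs \<and> xs ! i \<le> t} \<subseteq> {..<k - 1}"
      using sorted_nth_mono[OF assms(1), of "k - 1"] by (auto simp: not_less) (metis not_le order.trans)
    from card_mono[OF _ this] show False
      using k assms(2) by simp
  qed
qed

lemma card_sort_map_upt:
  "card {i. i < P \<and> Q (sort (map \<omega> [0..<P]) ! i)} = card {p. p < P \<and> Q (\<omega> p)}"
proof -
  have "card {i. i < P \<and> Q (sort (map \<omega> [0..<P]) ! i)} = length (filter Q (sort (map \<omega> [0..<P])))"
    by (simp add: length_filter_conv_card)
  also have "\<dots> = length (filter Q (map \<omega> [0..<P]))"
    by (metis mset_filter mset_sort size_mset)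
  also have "\<dots> = card {p. p < P \<and> Q (\<omega> p)}"
    by (auto simp: length_filter_conv_card intro!: arg_cong[where f=card])
  finally show ?thesis .
qed

lemma kth_smallest_le_iff:
  assumes "1 \<le> k" "k \<le> P"
  shows "kth_smallest k P \<omega> \<le> t \<longleftrightarrow> k \<le> card {p. p < P \<and> \<omega> p \<le> t}"
  unfolding kth_smallest_def using assms
  by (subst sorted_nth_le_iff_card) (auto simp: card_sort_map_upt[where Q="\<lambda>x. x \<le> t"])

lemma card_ge_kth_smallest:
  assumes "1 \<le> k" "k \<le> P"
  shows "P - k + 1 \<le> card {p. p < P \<and> kth_smallest k P \<omega> \<le> \<omega> p}"
proof -
  let ?xs = "sort (map \<omega> [0..<P])"
  have "{k - 1..<P} \<subseteq> {i. i < P \<and> ?xs ! (k - 1) \<le> ?xs ! i}"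
    using assms by (auto intro: sorted_nth_mono)
  from card_mono[OF _ this] show ?thesis
    unfolding kth_smallest_def card_sort_map_upt[where Q="\<lambda>x. ?xs ! (k - 1) \<le> x"]
    using assms by simp
qed

text \<open>The processors no faster than the \<open>k\<close>-th one each contribute at least its excess over \<open>t\<close>.\<close>

lemma kth_smallest_excess_le:
  assumes "1 \<le> k" "k \<le> P"
  shows "real (P - k + 1) * (kth_smallest k P \<omega> - t) \<le> (\<Sum>p<P. max 0 (\<omega> p - t))"
proof (cases "kth_smallest k P \<omega> \<le> t")
  case True
  then have "real (P - k + 1) * (kth_smallest k P \<omega> - t) \<le> 0"
    by (simp add: mult_nonneg_nonpos)
  also have "0 \<le> (\<Sum>p<P. max 0 (\<omega> p - t))"
    by (intro sum_nonneg) auto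
  finally show ?thesis .
next
  case False
  define B where "B = {p. p < P \<and> kth_smallest k P \<omega> \<le> \<omega> p}"
  have "real (P - k + 1) \<le> real (card B)"
    using card_ge_kth_smallest[OF assms, of \<omega>] unfolding B_def of_nat_le_iff .
  then have "real (P - k + 1) * (kth_smallest k P \<omega> - t) \<le> real (card B) * (kth_smallest k P \<omega> - t)"
    using False by (intro mult_right_mono) auto
  also have "\<dots> = (\<Sum>p\<in>B. kth_smallest k P \<omega> - t)"
    by simp
  also have "\<dots> \<le> (\<Sum>p\<in>B. max 0 (\<omega> p - t))"
    by (intro sum_mono) (auto simp: B_def)
  also have "\<dots> \<le> (\<Sum>p<P. max 0 (\<omega> p - t))"
    by (intro sum_mono2) (auto simp: B_def)
  finally show ?thesis .
qed

lemma borel_measurable_kth_smallest: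
  assumes "1 \<le> k" "k \<le> P" "\<And>p. p < P \<Longrightarrow> (\<lambda>\<omega>. \<omega> p) \<in> borel_measurable M"
  shows "kth_smallest k P \<in> borel_measurable M"
  unfolding borel_measurable_iff_le
proof
  fix t :: real
  have "card {p. p < P \<and> \<omega> p \<le> t} = (\<Sum>p<P. if \<omega> p \<le> t then 1 else 0 :: nat)" for \<omega> :: "nat \<Rightarrow> real"
    by (simp add: sum.If_cases Int_def conj_commute)
  then have "{\<omega> \<in> space M. kth_smallest k P \<omega> \<le> t}
      = {\<omega> \<in> space M. k \<le> (\<Sum>p<P. if \<omega> p \<le> t then 1 else 0 :: nat)}"
    by (simp add: kth_smallest_le_iff[OF assms(1,2)])
  also have "\<dots> \<in> sets M" using assms(3) by measurable
  finally show "{\<omega> \<in> space M. kth_smallest k P \<omega> \<le> t} \<in> sets M" .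
qed

lemma kth_smallest_in_image:
  assumes "1 \<le> k" "k \<le> P"
  shows "kth_smallest k P \<omega> \<in> \<omega> ` {..<P}"
proof -
  have "sort (map \<omega> [0..<P]) ! (k - 1) \<in> set (sort (map \<omega> [0..<P]))"
    using assms by (intro nth_mem) auto
  then show ?thesis unfolding kth_smallest_def by auto
qed

section \<open>The shifted exponential distribution\<close>

lemma exp_minus_one_le_half: "exp (-1::real) \<le> 1 / 2"
  using exp_ge_add_one_self[of 1] by (simp add: exp_minus field_simps)

lemma sexp_cdf_eq_max:
  assumes "l > 0" "mu > 0"
  shows "sexp_cdf mu l t = max 0 (1 - exp (- mu * (t / l - 1)))"
  using assms by (auto simp: sexp_cdf_def max_def mult_le_0_iff zero_le_mult_iff divide_less_eq not_less le_divide_eq)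

lemma sexp_cdf_is_cdf:
  assumes l: "l > 0" and mu: "mu > 0"
  shows "mono (sexp_cdf mu l)"
    and "\<And>a. continuous (at_right a) (sexp_cdf mu l)"
    and "(sexp_cdf mu l \<longlongrightarrow> 0) at_bot"
    and "(sexp_cdf mu l \<longlongrightarrow> 1) at_top"
proof -
  have eq: "sexp_cdf mu l = (\<lambda>t. max 0 (1 - exp (- mu * (t / l - 1))))"
    using sexp_cdf_eq_max[OF l mu] by auto
  show "mono (sexp_cdf mu l)"
    unfolding eq using l mu by (intro monoI max.mono diff_left_mono) (auto simp: divide_right_mono)
  show "\<And>a. continuous (at_right a) (sexp_cdf mu l)"
    unfolding eq by (intro continuous_intros) (use l in simp)
  have "\<forall>\<^sub>F t in at_bot. sexp_cdf mu l t = 0"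
    unfolding eventually_at_bot_linorder by (intro exI[of _ "l - 1"]) (auto simp: sexp_cdf_def)
  then show "(sexp_cdf mu l \<longlongrightarrow> 0) at_bot"
    by (rule tendsto_eventually)
  have "((\<lambda>t. 1 - exp (- mu * (t / l - 1))) \<longlongrightarrow> 1) at_top"
    using l mu by real_asymp
  moreover have "\<forall>\<^sub>F t in at_top. 1 - exp (- mu * (t / l - 1)) = sexp_cdf mu l t"
    unfolding eventually_at_top_linorder by (intro exI[of _ l]) (auto simp: sexp_cdf_def)
  ultimately show "(sexp_cdf mu l \<longlongrightarrow> 1) at_top"
    by (rule Lim_transform_eventually)
qed

lemma real_distribution_sexp_time: "l > 0 \<Longrightarrow> mu > 0 \<Longrightarrow> real_distribution (sexp_time mu l)"
  unfolding sexp_time_def using sexp_cdf_is_cdf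
  by (intro real_distribution_interval_measure) (auto dest: monoD)

lemma prob_space_sexp_time: "l > 0 \<Longrightarrow> mu > 0 \<Longrightarrow> prob_space (sexp_time mu l)"
  using real_distribution_sexp_time real_distribution_def by blast

lemma sets_sexp_time[simp, measurable_cong]: "sets (sexp_time mu l) = sets borel"
  unfolding sexp_time_def by simp

lemma space_sexp_time[simp]: "space (sexp_time mu l) = UNIV"
  unfolding sexp_time_def by simp

lemma measurable_sexp_time_iff[simp]: "measurable (sexp_time mu l) N = measurable borel N"
  by (rule measurable_cong_sets) auto

lemma measure_sexp_time_atMost:
  "l > 0 \<Longrightarrow> mu > 0 \<Longrightarrow> measure (sexp_time mu l) {..x} = sexp_cdf mu l x"
  unfolding sexp_time_def using sexp_cdf_is_cdf
  by (intro measure_interval_measure_Iic) (auto dest: monoD)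

lemma emeasure_sexp_time_greaterThan:
  assumes "l > 0" "mu > 0" "l \<le> x"
  shows "emeasure (sexp_time mu l) {x<..} = ennreal (exp (- mu * (x / l - 1)))"
proof -
  interpret prob_space "sexp_time mu l" using prob_space_sexp_time[OF assms(1,2)] .
  have "prob {x<..} = 1 - prob {..x}"
    using prob_compl[of "{..x}"] by (simp add: Compl_eq_Diff_UNIV[symmetric] Compl_atMost)
  then show ?thesis
    using measure_sexp_time_atMost[OF assms(1,2)] assms(3) by (simp add: emeasure_eq_measure sexp_cdf_def)
qed

lemma AE_sexp_time_ge:
  assumes "l > 0" "mu > 0"
  shows "AE x in sexp_time mu l. l \<le> x"
proof -
  interpret prob_space "sexp_time mu l" using prob_space_sexp_time[OF assms] .
  have "prob {..<l} \<le> prob {..l}" by (rule finite_measure_mono) auto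
  then have "emeasure (sexp_time mu l) {..<l} = 0"
    using measure_sexp_time_atMost[OF assms, of l] assms
    by (simp add: sexp_cdf_def emeasure_eq_measure measure_le_0_iff)
  then show ?thesis by (intro AE_I[of _ _ "{..<l}"]) auto
qed

lemma ennreal_excess_le_suminf_indicator:
  fixes y c \<delta> :: real
  assumes d: "\<delta> > 0"
  shows "ennreal (max 0 (y - c)) \<le> ennreal \<delta> * (\<Sum>k. indicator {c + real k * \<delta><..} y)"
proof (cases "y \<le> c")
  case True
  then show ?thesis by simp
next
  case False
  define n where "n = nat \<lceil>(y - c) / \<delta>\<rceil>"
  have n1: "(y - c) / \<delta> \<le> real n" unfolding n_def by linarith
  have n2: "real k < (y - c) / \<delta>" if "k < n" for k
  proof -
    have "real k + 1 \<le> real n" using that by linarith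
    moreover have "real n < (y - c) / \<delta> + 1"
    proof -
      have "(y - c) / \<delta> > 0" using False d by simp
      then have "real n = real_of_int \<lceil>(y - c) / \<delta>\<rceil>" unfolding n_def by simp
      then show ?thesis by linarith
    qed
    ultimately show ?thesis by linarith
  qed
  have ind: "indicator {c + real k * \<delta><..} y = (1::ennreal)" if "k < n" for k
  proof -
    have "real k * \<delta> < y - c" using n2[OF that] d by (simp add: pos_less_divide_eq)
    then show ?thesis by (simp add: indicator_def)
  qed
  have "ennreal (max 0 (y - c)) \<le> ennreal (\<delta> * real n)"
    using n1 d False by (intro ennreal_leI) (simp add: pos_divide_le_eq mult.commute)
  also have "\<dots> = ennreal \<delta> * (\<Sum>k<n. indicator {c + real k * \<delta><..} y)"
    using ind d by (simp add: ennreal_mult ennreal_of_nat_eq_real_of_nat)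
  also have "\<dots> \<le> ennreal \<delta> * (\<Sum>k. indicator {c + real k * \<delta><..} y)"
    by (intro mult_left_mono sum_le_suminf) auto
  finally show ?thesis .
qed

lemma nn_integral_excess_le_suminf_emeasure:
  fixes c \<delta> :: real
  assumes d: "\<delta> > 0" and sQ: "sets Q = sets borel"
  shows "(\<integral>\<^sup>+y. ennreal (max 0 (y - c)) \<partial>Q) \<le> ennreal \<delta> * (\<Sum>k. emeasure Q {c + real k * \<delta><..})"
proof -
  have "(\<integral>\<^sup>+y. ennreal (max 0 (y - c)) \<partial>Q) \<le> (\<integral>\<^sup>+y. ennreal \<delta> * (\<Sum>k. indicator {c + real k * \<delta><..} y) \<partial>Q)"
    by (intro nn_integral_mono ennreal_excess_le_suminf_indicator d)
  also have "\<dots> = ennreal \<delta> * (\<integral>\<^sup>+y. (\<Sum>k. indicator {c + real k * \<delta><..} y) \<partial>Q)"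
    using sQ by (intro nn_integral_cmult) (simp add: measurable_cong_sets[OF sQ refl])
  also have "(\<integral>\<^sup>+y. (\<Sum>k. indicator {c + real k * \<delta><..} y) \<partial>Q) = (\<Sum>k. \<integral>\<^sup>+y. indicator {c + real k * \<delta><..} y \<partial>Q)"
    by (intro nn_integral_suminf) (simp add: measurable_cong_sets[OF sQ refl])
  also have "\<dots> = (\<Sum>k. emeasure Q {c + real k * \<delta><..})"
    using sQ by (intro suminf_cong nn_integral_indicator) auto
  finally show ?thesis .
qed

lemma nn_integral_sexp_time_excess_le:
  assumes l: "l > 0" and mu: "mu > 0" and c: "l \<le> c"
  shows "(\<integral>\<^sup>+y. ennreal (max 0 (y - c)) \<partial>sexp_time mu l) \<le> ennreal (2 * (l / mu) * exp (- mu * (c / l - 1)))"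
proof -
  define E where "E = exp (- mu * (c / l - 1))"
  define q where "q = exp (-1::real)"
  txt \<open>Steps of length \<open>l/\<mu>\<close> make the tail probabilities a geometric series with ratio
    \<open>e\<^sup>-\<^sup>1 \<le> 1/2\<close>.\<close>
  have q: "0 \<le> q" "q \<le> 1 / 2" unfolding q_def using exp_minus_one_le_half by auto
  have tail: "emeasure (sexp_time mu l) {c + real k * (l / mu)<..} = ennreal (E * q ^ k)" for k
  proof -
    have "l \<le> c + real k * (l / mu)" using l mu c by (simp add: add_increasing2)
    moreover have "- mu * ((c + real k * (l / mu)) / l - 1) = - mu * (c / l - 1) + real k * (-1)"
      using l mu by (simp add: field_simps)
    moreover have "exp (- mu * (c / l - 1) + real k * (-1)) = E * q ^ k"
      unfolding E_def q_def by (simp only: exp_add exp_of_nat_mult)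
    ultimately show ?thesis
      by (simp only: emeasure_sexp_time_greaterThan[OF l mu])
  qed
  have "(\<integral>\<^sup>+y. ennreal (max 0 (y - c)) \<partial>sexp_time mu l)
      \<le> ennreal (l / mu) * (\<Sum>k. emeasure (sexp_time mu l) {c + real k * (l / mu)<..})"
    using l mu by (intro nn_integral_excess_le_suminf_emeasure) simp_all
  also have "(\<Sum>k. emeasure (sexp_time mu l) {c + real k * (l / mu)<..}) = ennreal (E * (1 / (1 - q)))"
    unfolding tail using q by (intro suminf_ennreal_eq sums_mult geometric_sums) (auto simp: E_def)
  also have "ennreal (l / mu) * ennreal (E * (1 / (1 - q))) \<le> ennreal (2 * (l / mu) * E)"
    using l mu q by (auto simp: E_def field_simps ennreal_mult[symmetric] intro!: ennreal_leI)
  finally show ?thesis unfolding E_def .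
qed

lemma integrable_sexp_time:
  assumes l: "l > 0" and mu: "mu > 0"
  shows "integrable (sexp_time mu l) (\<lambda>x. x)"
proof (rule integrableI_bounded)
  interpret prob_space "sexp_time mu l" using prob_space_sexp_time[OF l mu] .
  have "ennreal (norm x) = ennreal l + ennreal (max 0 (x - l))" if "l \<le> x" for x
    using that l by (simp add: ennreal_plus[symmetric] del: ennreal_plus)
  then have "(\<integral>\<^sup>+x. ennreal (norm x) \<partial>sexp_time mu l)
      = (\<integral>\<^sup>+x. ennreal l + ennreal (max 0 (x - l)) \<partial>sexp_time mu l)"
    using AE_sexp_time_ge[OF l mu] by (intro nn_integral_cong_AE) (auto elim!: eventually_mono)
  also have "\<dots> = ennreal l + (\<integral>\<^sup>+x. ennreal (max 0 (x - l)) \<partial>sexp_time mu l)"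
    by (subst nn_integral_add) (simp_all add: emeasure_space_1[simplified])
  also have "\<dots> < \<infinity>"
    using nn_integral_sexp_time_excess_le[OF l mu order_refl] by (simp add: le_less_trans)
  finally show "(\<integral>\<^sup>+x. ennreal (norm x) \<partial>sexp_time mu l) < \<infinity>" .
qed simp

section \<open>Independent processor times\<close>

lemma prob_space_proc_space: "\<forall>p<P. len p > 0 \<Longrightarrow> mu > 0 \<Longrightarrow> prob_space (proc_space mu len P)"
  unfolding proc_space_def by (intro prob_space_PiM prob_space_sexp_time) auto

lemma space_proc_space: "space (proc_space mu len P) = PiE {..<P} (\<lambda>_. UNIV)"
  unfolding proc_space_def by (simp add: space_PiM)

lemma sets_proc_space: "sets (proc_space mu len P) = sets (PiM {..<P} (\<lambda>_. borel))"
  unfolding proc_space_def by (rule sets_PiM_cong) simp_all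

lemma measurable_proc_space_component[measurable]:
  "p < P \<Longrightarrow> (\<lambda>\<omega>. \<omega> p) \<in> borel_measurable (proc_space mu len P)"
  unfolding measurable_cong_sets[OF sets_proc_space refl]
  by (rule measurable_component_singleton[where M="\<lambda>_. borel", simplified]) simp

lemma distr_proc_space_component:
  assumes "\<forall>p<P. len p > 0" "mu > 0" "p < P"
  shows "distr (proc_space mu len P) (sexp_time mu (len p)) (\<lambda>\<omega>. \<omega> p) = sexp_time mu (len p)"
  unfolding proc_space_def using assms by (intro distr_PiM_component prob_space_sexp_time) auto

lemma nn_integral_proc_space_component:
  assumes "\<forall>p<P. len p > 0" "mu > 0" "p < P" "f \<in> borel_measurable borel"
  shows "(\<integral>\<^sup>+\<omega>. f (\<omega> p) \<partial>proc_space mu len P) = (\<integral>\<^sup>+y. f y \<partial>sexp_time mu (len p))"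
  using nn_integral_distr[of "\<lambda>\<omega>. \<omega> p" "proc_space mu len P" "sexp_time mu (len p)" f] assms
  by (simp add: distr_proc_space_component)

lemma integrable_proc_space_component:
  assumes "\<forall>p<P. len p > 0" "mu > 0" "p < P"
  shows "integrable (proc_space mu len P) (\<lambda>\<omega>. \<omega> p)"
proof -
  have "integrable (distr (proc_space mu len P) (sexp_time mu (len p)) (\<lambda>\<omega>. \<omega> p)) (\<lambda>x. x)"
    unfolding distr_proc_space_component[OF assms] using integrable_sexp_time assms by simp
  then show ?thesis
    using assms by (subst (asm) integrable_distr_eq) auto
qed

lemma AE_proc_space_ge:
  assumes "\<forall>p<P. len p > 0" "mu > 0"
  shows "AE \<omega> in proc_space mu len P. \<forall>p<P. len p \<le> \<omega> p"
proof -
  have "AE \<omega> in proc_space mu len P. \<forall>p\<in>{..<P}. len p \<le> \<omega> p"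
    unfolding proc_space_def using assms
    by (intro eventually_ball_finite ballI AE_PiM_component prob_space_sexp_time AE_sexp_time_ge) auto
  then show ?thesis by auto
qed

lemma measure_proc_space_all_le:
  assumes "\<forall>p<P. len p > 0" "mu > 0"
  shows "measure (proc_space mu len P) (PiE {..<P} (\<lambda>_. {..t})) = (\<Prod>p<P. sexp_cdf mu (len p) t)"
proof -
  let ?M = "\<lambda>p. sexp_time mu (len p)"
  have "emeasure (PiM {..<P} ?M) (prod_emb {..<P} ?M {..<P} (PiE {..<P} (\<lambda>_. {..t})))
      = (\<Prod>p<P. emeasure (?M p) {..t})"
    using assms by (intro emeasure_PiM_emb) (auto intro: prob_space_sexp_time)
  then have "emeasure (proc_space mu len P) (PiE {..<P} (\<lambda>_. {..t})) = (\<Prod>p<P. emeasure (?M p) {..t})"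
    unfolding proc_space_def by (simp add: prod_emb_PiE_same_index)
  also have "\<dots> = (\<Prod>p<P. ennreal (sexp_cdf mu (len p) t))"
    using assms by (intro prod.cong refl)
      (simp add: finite_measure.emeasure_eq_measure[OF prob_space.finite_measure[OF prob_space_sexp_time]] measure_sexp_time_atMost)
  also have "\<dots> = ennreal (\<Prod>p<P. sexp_cdf mu (len p) t)"
    using assms by (intro prod_ennreal) (simp add: sexp_cdf_eq_max)
  finally show ?thesis
    using assms by (simp add: finite_measure.emeasure_eq_measure[OF prob_space.finite_measure[OF prob_space_proc_space]] prod_nonneg sexp_cdf_eq_max)
qed

lemma integrable_proc_space_selection:
  assumes "\<forall>p<P. len p > 0" "mu > 0"
    and "f \<in> borel_measurable (proc_space mu len P)" "\<And>\<omega>. f \<omega> \<in> \<omega> ` {..<P}"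
  shows "integrable (proc_space mu len P) f"
proof (rule Bochner_Integration.integrable_bound)
  show "integrable (proc_space mu len P) (\<lambda>\<omega>. \<Sum>p<P. \<bar>\<omega> p\<bar>)"
    using integrable_proc_space_component[OF assms(1,2)] by auto
  have "\<bar>f \<omega>\<bar> \<le> (\<Sum>p<P. \<bar>\<omega> p\<bar>)" for \<omega>
  proof -
    obtain p where "p < P" "f \<omega> = \<omega> p" using assms(4)[of \<omega>] by auto
    then show ?thesis by (auto intro: member_le_sum)
  qed
  then show "AE \<omega> in proc_space mu len P. norm (f \<omega>) \<le> norm (\<Sum>p<P. \<bar>\<omega> p\<bar>)"
    by (intro AE_I2) (simp add: sum_nonneg)
qed (rule assms(3))

lemma integral_proc_space_selection_ge:
  assumes "\<forall>p<P. len p > 0" "mu > 0" "\<forall>p<P. L \<le> len p"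
    and "f \<in> borel_measurable (proc_space mu len P)" "\<And>\<omega>. f \<omega> \<in> \<omega> ` {..<P}"
  shows "L \<le> integral\<^sup>L (proc_space mu len P) f"
proof -
  interpret prob_space "proc_space mu len P" by (rule prob_space_proc_space[OF assms(1,2)])
  have "L \<le> f \<omega>" if "\<forall>p<P. len p \<le> \<omega> p" for \<omega>
  proof -
    obtain p where "p < P" "f \<omega> = \<omega> p" using assms(5)[of \<omega>] by auto
    then show ?thesis using that assms(3) by (metis order_trans)
  qed
  then have "AE \<omega> in proc_space mu len P. L \<le> f \<omega>"
    using AE_proc_space_ge[OF assms(1,2)] by (rule eventually_mono[rotated])
  then show ?thesis
    by (rule integral_ge_const[OF integrable_proc_space_selection[OF assms(1,2,4,5)]])
qed

section \<open>Expected completion times\<close>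

lemma ennreal_kth_smallest_le:
  assumes "1 \<le> k" "k \<le> P" "0 \<le> t"
  shows "ennreal (kth_smallest k P \<omega>)
    \<le> ennreal t + ennreal (1 / real (P - k + 1)) * (\<Sum>p<P. ennreal (max 0 (\<omega> p - t)))"
proof -
  let ?m = "real (P - k + 1)" and ?S = "\<Sum>p<P. max 0 (\<omega> p - t)"
  have S: "0 \<le> ?S" by (intro sum_nonneg) auto
  have "kth_smallest k P \<omega> \<le> t + 1 / ?m * ?S"
    using kth_smallest_excess_le[OF assms(1,2), of \<omega> t] by (simp add: field_simps)
  then have "ennreal (kth_smallest k P \<omega>) \<le> ennreal (t + 1 / ?m * ?S)"
    by (rule ennreal_leI)
  also have "\<dots> = ennreal t + ennreal (1 / ?m * ?S)"
    using assms(3) S by (intro ennreal_plus) simp_all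
  also have "ennreal (1 / ?m * ?S) = ennreal (1 / ?m) * ennreal ?S"
    using S by (intro ennreal_mult) simp_all
  also have "ennreal ?S = (\<Sum>p<P. ennreal (max 0 (\<omega> p - t)))"
    by (rule sum_ennreal[symmetric]) simp
  finally show ?thesis .
qed

lemma expectation_kth_smallest_le:
  assumes mu: "mu > 0" and s: "s > 0" and k: "1 \<le> k" "k \<le> P" and a: "a \<ge> 0"
  shows "integral\<^sup>L (proc_space mu (\<lambda>p. s) P) (kth_smallest k P)
           \<le> s * (1 + a / mu) + real P / real (P - k + 1) * (2 * (s / mu) * exp (- a))"
proof -
  define m where "m = real (P - k + 1)"
  define t where "t = s * (1 + a / mu)"
  define G where "G = 2 * (s / mu) * exp (- a)"
  define Q where "Q = proc_space mu (\<lambda>p. s) P"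
  interpret Q: prob_space Q unfolding Q_def by (rule prob_space_proc_space) (use s mu in auto)
  have m: "m > 0" unfolding m_def by simp
  have t: "s \<le> t" unfolding t_def using s mu a by simp
  have G: "G \<ge> 0" unfolding G_def using s mu by simp
  have excess: "(\<integral>\<^sup>+\<omega>. ennreal (max 0 (\<omega> p - t)) \<partial>Q) \<le> ennreal G" if "p < P" for p
  proof -
    have "- mu * (t / s - 1) = - a" unfolding t_def using s mu by (simp add: field_simps)
    then show ?thesis
      unfolding Q_def G_def using nn_integral_sexp_time_excess_le[OF s mu t] that s mu
      by (subst nn_integral_proc_space_component) auto
  qed
  have "(\<integral>\<^sup>+\<omega>. ennreal (kth_smallest k P \<omega>) \<partial>Q)
      \<le> (\<integral>\<^sup>+\<omega>. ennreal t + ennreal (1 / m) * (\<Sum>p<P. ennreal (max 0 (\<omega> p - t))) \<partial>Q)"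
    unfolding m_def using t s by (intro nn_integral_mono ennreal_kth_smallest_le[OF k]) simp
  also have "\<dots> = ennreal t + ennreal (1 / m) * (\<Sum>p<P. \<integral>\<^sup>+\<omega>. ennreal (max 0 (\<omega> p - t)) \<partial>Q)"
  proof -
    have "(\<integral>\<^sup>+\<omega>. (\<Sum>p<P. ennreal (max 0 (\<omega> p - t))) \<partial>Q) = (\<Sum>p<P. \<integral>\<^sup>+\<omega>. ennreal (max 0 (\<omega> p - t)) \<partial>Q)"
      unfolding Q_def by (intro nn_integral_sum) measurable
    then show ?thesis
      unfolding Q_def using Q.emeasure_space_1 by (simp add: nn_integral_add nn_integral_cmult Q_def)
  qed
  also have "\<dots> \<le> ennreal t + ennreal (1 / m) * (\<Sum>p<P. ennreal G)"
    by (intro add_left_mono mult_left_mono sum_mono excess) auto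
  also have "\<dots> = ennreal (t + 1 / m * (real P * G))"
    using t s m G by (simp add: ennreal_plus ennreal_of_nat_eq_real_of_nat ennreal_mult[symmetric])
  finally have "integral\<^sup>L Q (kth_smallest k P) \<le> t + 1 / m * (real P * G)"
    using t s m G by (intro integral_real_bounded) auto
  then show ?thesis unfolding Q_def t_def G_def m_def by simp
qed

lemma (in prob_space) expectation_ge_threshold:
  assumes f: "integrable M f" and L: "AE x in M. L \<le> f x" and t: "L \<le> t"
  shows "L + (t - L) * prob {x \<in> space M. t < f x} \<le> expectation f"
proof -
  let ?A = "{x \<in> space M. t < f x}"
  have "?A \<in> events" using borel_measurable_integrable[OF f] by measurable
  then have ind: "integrable M (indicator ?A :: _ \<Rightarrow> real)"
    by (intro integrable_real_indicator) (auto simp: emeasure_eq_measure)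
  then have "L + (t - L) * prob ?A = expectation (\<lambda>x. L + (t - L) * indicator ?A x)"
    by (subst Bochner_Integration.integral_add) (auto simp: prob_space Int_absorb2)
  also have "\<dots> \<le> expectation f"
  proof (rule integral_mono_AE[OF _ f])
    show "integrable M (\<lambda>x. L + (t - L) * indicator ?A x)"
      using ind by auto
    show "AE x in M. L + (t - L) * indicator ?A x \<le> f x"
      using L by eventually_elim (auto simp: indicator_def)
  qed
  finally show ?thesis .
qed

lemma sexp_cdf_le_of_le_length:
  assumes "0 < L" "L \<le> l" "0 < mu" "0 \<le> a"
  shows "sexp_cdf mu l (L * (1 + a / mu)) \<le> 1 - exp (- a)"
proof -
  define x where "x = L * (1 + a / mu) / l"
  have "x \<le> L * (1 + a / mu) / L"
    unfolding x_def using assms by (intro divide_left_mono) auto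
  then have "x \<le> 1 + a / mu" using assms by simp
  then have "mu * x \<le> mu + a"
    using mult_left_mono[of x "1 + a / mu" mu] assms by (simp add: distrib_left)
  then have "exp (- a) \<le> exp (- mu * (x - 1))"
    by (simp add: algebra_simps)
  then show ?thesis
    using assms by (simp add: sexp_cdf_eq_max x_def)
qed

lemma prob_proc_space_max_gt_ge:
  assumes mu: "mu > 0" and L: "L > 0" and len: "\<forall>p<P. L \<le> len p" and P: "P \<ge> 1" and a: "a \<ge> 0"
  defines "Q \<equiv> proc_space mu len P" and "t \<equiv> L * (1 + a / mu)"
  shows "1 - (1 - exp (- a)) ^ P \<le> measure Q {\<omega> \<in> space Q. t < Max (\<omega> ` {..<P})}"
proof -
  have len_pos: "\<forall>p<P. len p > 0" using len L by (auto intro: less_le_trans)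
  interpret Q: prob_space Q unfolding Q_def by (rule prob_space_proc_space[OF len_pos mu])
  have "\<not> t < Max (\<omega> ` {..<P}) \<longleftrightarrow> (\<forall>p<P. \<omega> p \<le> t)" for \<omega> :: "nat \<Rightarrow> real"
    using P by (subst not_less, subst Max_le_iff) (auto simp: lessThan_empty_iff)
  then have not_above: "{\<omega> \<in> space Q. \<not> t < Max (\<omega> ` {..<P})} = PiE {..<P} (\<lambda>_. {..t})"
    unfolding Q_def space_proc_space by (auto simp: PiE_iff extensional_def)
  have "Q.prob (PiE {..<P} (\<lambda>_. {..t})) = (\<Prod>p<P. sexp_cdf mu (len p) t)"
    unfolding Q_def by (rule measure_proc_space_all_le[OF len_pos mu])
  also have "\<dots> \<le> (\<Prod>p<P. 1 - exp (- a))"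
    unfolding t_def using len len_pos mu
    by (intro prod_mono conjI sexp_cdf_le_of_le_length[OF L _ mu a]) (simp_all add: sexp_cdf_eq_max)
  finally have "Q.prob {\<omega> \<in> space Q. \<not> t < Max (\<omega> ` {..<P})} \<le> (1 - exp (- a)) ^ P"
    unfolding not_above by simp
  moreover have "{\<omega> \<in> space Q. \<not> t < Max (\<omega> ` {..<P})} \<in> sets Q"
    unfolding Q_def by measurable
  ultimately show ?thesis
    using Q.prob_neg[of "\<lambda>\<omega>. \<not> t < Max (\<omega> ` {..<P})"] by simp
qed

lemma expectation_max_ge:
  assumes mu: "mu > 0" and L: "L > 0" and len: "\<forall>p<P. L \<le> len p" and P: "P \<ge> 1" and a: "a \<ge> 0"
  shows "L + L * (a / mu) * (1 - (1 - exp (- a)) ^ P)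
           \<le> integral\<^sup>L (proc_space mu len P) (\<lambda>\<omega>. Max (\<omega> ` {..<P}))"
proof -
  have len_pos: "\<forall>p<P. len p > 0" using len L by (auto intro: less_le_trans)
  define Q where "Q = proc_space mu len P"
  interpret Q: prob_space Q unfolding Q_def by (rule prob_space_proc_space[OF len_pos mu])
  define t where "t = L * (1 + a / mu)"
  have tL: "t - L = L * (a / mu)" "L \<le> t" unfolding t_def using L mu a by (simp_all add: algebra_simps)
  have "L + L * (a / mu) * (1 - (1 - exp (- a)) ^ P)
      \<le> L + (t - L) * Q.prob {\<omega> \<in> space Q. t < Max (\<omega> ` {..<P})}"
    using prob_proc_space_max_gt_ge[OF mu L len P a, folded Q_def t_def] L mu a
    unfolding tL(1) by (intro add_left_mono mult_left_mono) auto
  also have "\<dots> \<le> integral\<^sup>L Q (\<lambda>\<omega>. Max (\<omega> ` {..<P}))"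
  proof (rule Q.expectation_ge_threshold[OF _ _ tL(2)])
    have "Max (\<omega> ` {..<P}) \<in> \<omega> ` {..<P}" for \<omega> :: "nat \<Rightarrow> real"
      using P by (intro Max_in) (auto simp: lessThan_empty_iff)
    then show "integrable Q (\<lambda>\<omega>. Max (\<omega> ` {..<P}))"
      unfolding Q_def by (intro integrable_proc_space_selection[OF len_pos mu]) measurable
    have "L \<le> Max (\<omega> ` {..<P})" if "\<forall>p<P. len p \<le> \<omega> p" for \<omega>
    proof -
      have "L \<le> len 0" "len 0 \<le> \<omega> 0" "\<omega> 0 \<le> Max (\<omega> ` {..<P})"
        using that len P by (auto intro: Max_ge)
      then show ?thesis by linarith
    qed
    then show "AE \<omega> in Q. L \<le> Max (\<omega> ` {..<P})"
      using AE_proc_space_ge[OF len_pos mu] unfolding Q_def by (rule eventually_mono[rotated])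
  qed
  finally show ?thesis unfolding Q_def .
qed

lemma E_MDS_ge:
  assumes "mu > 0" "N > 0" "1 \<le> M" "M \<le> P"
  shows "real N \<le> E_MDS mu M P N"
  unfolding E_MDS_def using assms
  by (intro integral_proc_space_selection_ge borel_measurable_kth_smallest kth_smallest_in_image) auto

lemma row_count_bounds:
  assumes "valid_rows M P asg" "1 \<le> M" "M \<le> P" "i < M"
  shows "1 \<le> row_count P asg i" "real (row_count P asg i) \<le> 2 * real P / real M"
proof -
  define x where "x = real P / real M"
  have x: "1 \<le> x" unfolding x_def using assms(2,3) by simp
  have "row_count P asg i \<in> {nat \<lfloor>x\<rfloor>, nat \<lceil>x\<rceil>}"
    using assms(1,4) unfolding valid_rows_def x_def by blast
  moreover have "1 \<le> nat \<lfloor>x\<rfloor>" "nat \<lfloor>x\<rfloor> \<le> nat \<lceil>x\<rceil>" "real (nat \<lceil>x\<rceil>) \<le> 2 * x"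
    using x by linarith+
  ultimately show "1 \<le> row_count P asg i" "real (row_count P asg i) \<le> 2 * real P / real M"
    unfolding x_def by auto
qed

lemma E_Rep_ge:
  assumes mu: "mu > 0" and N: "N > 0" and rows: "valid_rows M P asg" "1 \<le> M" "M \<le> P"
  shows "real N \<le> E_Rep mu M P N asg"
proof -
  let ?row = "\<lambda>i. {p. p < P \<and> asg p = i}"
  have row_ne: "?row i \<noteq> {}" if "i < M" for i
    using row_count_bounds(1)[OF rows that] unfolding row_count_def by (metis card.empty not_one_le_zero)
  have "Max ((\<lambda>i. Min (\<omega> ` ?row i)) ` {..<M}) \<in> \<omega> ` {..<P}" for \<omega> :: "nat \<Rightarrow> real"
  proof -
    have "Max ((\<lambda>i. Min (\<omega> ` ?row i)) ` {..<M}) \<in> (\<lambda>i. Min (\<omega> ` ?row i)) ` {..<M}"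
      using rows(2) by (intro Max_in) (auto simp: lessThan_empty_iff)
    then obtain i where "i < M" "Max ((\<lambda>i. Min (\<omega> ` ?row i)) ` {..<M}) = Min (\<omega> ` ?row i)"
      by auto
    moreover have "Min (\<omega> ` ?row i) \<in> \<omega> ` ?row i"
      using row_ne[OF \<open>i < M\<close>] by (intro Min_in) auto
    ultimately show ?thesis by auto
  qed
  then show ?thesis
    unfolding E_Rep_def using mu N by (intro integral_proc_space_selection_ge) auto
qed

lemma one_minus_inverse_power_le_half: "n \<ge> 1 \<Longrightarrow> (1 - 1 / real n) ^ n \<le> 1 / 2"
proof -
  assume n: "n \<ge> 1"
  have "(1 - 1 / real n) ^ n \<le> exp (- (1 / real n)) ^ n"
    using n by (intro power_mono exp_minus_ge) (simp add: divide_simps)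
  also have "\<dots> = exp (-1)"
    using n by (simp add: exp_of_nat_mult[symmetric])
  finally show ?thesis using exp_minus_one_le_half by linarith
qed

lemma E_UC_ge:
  assumes mu: "mu > 0" and N: "N > 0" and rows: "valid_rows M P asg" "1 \<le> M" "M \<le> P"
  shows "real N * real M * ln (real P) / (4 * mu * real P) \<le> E_UC mu P N asg"
proof -
  have P: "P \<ge> 1" using rows by simp
  define L where "L = real N * real M / (2 * real P)"
  have L: "L > 0" unfolding L_def using N rows P by simp
  have len: "\<forall>p<P. L \<le> real N / real (row_count P asg (asg p))"
  proof (intro allI impI)
    fix p assume "p < P"
    then have "asg p < M" using rows(1) unfolding valid_rows_def by blast
    from row_count_bounds[OF rows this] show "L \<le> real N / real (row_count P asg (asg p))"
      unfolding L_def using N rows by (simp add: field_simps)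
  qed
  define B where "B = L * (ln (real P) / mu)"
  have B: "0 \<le> B" unfolding B_def using L mu P by simp
  txt \<open>With \<open>a = ln P\<close>, all blocks finish early with probability at most \<open>(1 - 1/P)\<^sup>P \<le> 1/2\<close>.\<close>
  have "(1 - exp (- ln (real P))) ^ P \<le> 1 / 2"
    using one_minus_inverse_power_le_half[OF P] P by (simp add: exp_minus inverse_eq_divide)
  then have "B * (1 / 2) \<le> B * (1 - (1 - exp (- ln (real P))) ^ P)"
    using B by (intro mult_left_mono) auto
  then have "B / 2 \<le> L + B * (1 - (1 - exp (- ln (real P))) ^ P)"
    using L by simp
  also have "\<dots> \<le> E_UC mu P N asg"
    unfolding E_UC_def B_def using P by (intro expectation_max_ge[OF mu L len]) simp_all
  finally show ?thesis unfolding B_def L_def by (simp add: field_simps)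
qed

lemma E_SD_le:
  assumes mu: "mu > 0" and N: "N > 0" and M: "even M" "1 \<le> M" "M \<le> P"
  shows "E_SD mu M (P - M div 2) P N
           \<le> 3 / 2 * real N * real M / real P * (1 + (ln (real P / real (M div 2 + 1)) + 2) / mu)"
proof -
  define h where "h = M div 2"
  have M_eq: "real M = 2 * real h" unfolding h_def using M(1) by auto
  have h: "1 \<le> h" "h < P" using M M_eq by linarith+
  define s where "s = real N / real P * (real P - real (P - h) + real M)"
  have s_eq: "s = 3 / 2 * real N * real M / real P" unfolding s_def using h M_eq by simp
  have s: "s > 0" unfolding s_eq using N M h by simp
  txt \<open>This choice of \<open>a\<close> cancels the factor \<open>P / (P - K + 1)\<close> in the excess term.\<close>
  define a where "a = ln (real P / real (h + 1))"
  have a: "a \<ge> 0" unfolding a_def using h by simp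
  have exp_a: "exp (- a) = real (h + 1) / real P"
    unfolding a_def using h by (simp add: exp_minus exp_ln inverse_eq_divide)
  have "E_SD mu M (P - h) P N
      \<le> s * (1 + a / mu) + real P / real (P - (P - h) + 1) * (2 * (s / mu) * exp (- a))"
    unfolding E_SD_def s_def[symmetric] using h by (intro expectation_kth_smallest_le[OF mu s _ _ a]) auto
  also have "real P / real (P - (P - h) + 1) * (2 * (s / mu) * exp (- a))
      = 2 * (s / mu) * (real P / real (h + 1) * (real (h + 1) / real P))"
    unfolding exp_a using h by (simp add: Suc_diff_le mult.left_commute)
  also have "\<dots> = 2 * (s / mu)"
    using h by simp
  finally show ?thesis
    unfolding h_def[symmetric] a_def[symmetric] s_eq[symmetric] using mu by (simp add: field_simps)
qed

section \<open>Asymptotics\<close>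

lemma E_SD_ratio_le:
  assumes mu: "mu > 0" and N: "N > 0" and c1: "c1 > 0" and c2: "c2 > 0"
    and M: "even M" "1 \<le> M" "2 * real M \<le> real P"
    and lnP: "0 < ln (real P)" and lnlnP: "1 \<le> ln (ln (real P))"
    and lower: "c1 * (real P / ln (real P)) \<le> real M" and upper: "real M \<le> c2 * (real P / ln (real P))"
  shows "E_SD mu M (P - M div 2) P N / real N
           \<le> 3 / 2 * c2 * (1 + (\<bar>ln (2 / c1)\<bar> + 3) / mu) * (ln (ln (real P)) / ln (real P))"
proof -
  define A where "A = \<bar>ln (2 / c1)\<bar>"
  define a where "a = ln (real P / real (M div 2 + 1))"
  have P: "real P > 0" using M by linarith
  have "real (M div 2 + 1) \<le> real P" using M by linarith
  then have a: "0 \<le> a" unfolding a_def by simp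
  have "real P / real (M div 2 + 1) \<le> 2 * ln (real P) / c1"
  proof -
    have "c1 * real P \<le> 2 * real (M div 2 + 1) * ln (real P)"
      using lower M(1) lnP by (auto simp: field_simps elim!: evenE)
    then show ?thesis using c1 by (simp add: field_simps)
  qed
  then have "a \<le> ln (2 / c1 * ln (real P))"
    unfolding a_def using P lnP c1 by (subst ln_le_cancel_iff) auto
  also have "\<dots> = ln (2 / c1) + ln (ln (real P))"
    using c1 lnP by (subst ln_mult) auto
  finally have "a \<le> ln (2 / c1) + ln (ln (real P))" .
  then have "1 + (a + 2) / mu \<le> 1 + (A + ln (ln (real P)) + 2) / mu"
    unfolding A_def using mu by (simp add: divide_right_mono)
  also have "\<dots> \<le> (1 + (A + 3) / mu) * ln (ln (real P))"
  proof -
    have "A \<le> A * ln (ln (real P))" using mult_left_mono[OF lnlnP] unfolding A_def by simp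
    then have "A + ln (ln (real P)) + 2 \<le> (A + 3) * ln (ln (real P))"
      using lnlnP by (simp add: algebra_simps)
    then have "(A + ln (ln (real P)) + 2) / mu \<le> (A + 3) * ln (ln (real P)) / mu"
      using mu by (simp add: divide_right_mono)
    then show ?thesis
      using lnlnP by (simp add: algebra_simps)
  qed
  finally have factor: "1 + (a + 2) / mu \<le> (1 + (A + 3) / mu) * ln (ln (real P))" .
  have "E_SD mu M (P - M div 2) P N / real N \<le> 3 / 2 * (real M / real P) * (1 + (a + 2) / mu)"
    using E_SD_le[OF mu N M(1,2)] M N unfolding a_def by (simp add: field_simps)
  also have "\<dots> \<le> 3 / 2 * (c2 / ln (real P)) * ((1 + (A + 3) / mu) * ln (ln (real P)))"
    using upper P lnP mu factor lnlnP a c2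
    by (intro mult_mono mult_left_mono) (simp_all add: field_simps add_nonneg_nonneg)
  finally show ?thesis unfolding A_def by simp
qed

lemma E_UC_ratio_ge:
  assumes mu: "mu > 0" and N: "N > 0" and rows: "valid_rows M P asg" "1 \<le> M" "2 * real M \<le> real P"
    and lnP: "0 < ln (real P)" and lower: "c1 * (real P / ln (real P)) \<le> real M"
  shows "c1 / (4 * mu) \<le> E_UC mu P N asg / real N"
proof -
  have P: "0 < real P" "M \<le> P" using rows by linarith+
  have "c1 * real P \<le> real M * ln (real P)"
    using lower lnP pos_divide_le_eq[of "ln (real P)" "c1 * real P"] by simp
  then have "c1 * real P * (real N / (4 * mu * real P)) \<le> real M * ln (real P) * (real N / (4 * mu * real P))"
    using P mu by (intro mult_right_mono) auto
  then have "c1 / (4 * mu) * real N \<le> real N * real M * ln (real P) / (4 * mu * real P)"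
    using P by (simp add: field_simps)
  also have "\<dots> \<le> E_UC mu P N asg"
    by (rule E_UC_ge[OF mu N rows(1,2) P(2)])
  finally show ?thesis
    using N by (simp add: field_simps)
qed

lemma eventually_scaling_bounds:
  fixes M :: "nat \<Rightarrow> nat"
  assumes "(\<lambda>P. real (M P)) \<in> \<Theta>(\<lambda>P. real P / ln (real P))"
  obtains c1 c2 where "c1 > 0" "c2 > 0"
    "\<forall>\<^sub>F P in at_top. 0 < ln (real P) \<and> 1 \<le> ln (ln (real P)) \<and> 2 * real (M P) \<le> real P \<and>
       c1 * (real P / ln (real P)) \<le> real (M P) \<and> real (M P) \<le> c2 * (real P / ln (real P))"
proof -
  obtain c2 where c2: "c2 > 0"
    and upper: "\<forall>\<^sub>F P in at_top. norm (real (M P)) \<le> c2 * norm (real P / ln (real P))"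
    using bigthetaD1[OF assms] by (rule landau_o.bigE)
  obtain c1 where c1: "c1 > 0"
    and lower: "\<forall>\<^sub>F P in at_top. norm (real (M P)) \<ge> c1 * norm (real P / ln (real P))"
    using bigthetaD2[OF assms] by (rule landau_omega.bigE)
  have "\<forall>\<^sub>F P in at_top. 2 * c2 + 3 \<le> ln (real (P :: nat))"
    by real_asymp
  then have "\<forall>\<^sub>F P in at_top. 0 < ln (real P) \<and> 1 \<le> ln (ln (real P)) \<and> 2 * real (M P) \<le> real P \<and>
       c1 * (real P / ln (real P)) \<le> real (M P) \<and> real (M P) \<le> c2 * (real P / ln (real P))"
    using upper lower
  proof eventually_elim
    case (elim P)
    then have lnP: "0 < ln (real P)" "3 \<le> ln (real P)" using c2 by linarith+
    then have P: "0 < real P" by (cases "P = 0") auto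
    have "exp 1 \<le> ln (real P)" using exp_le lnP by linarith
    then have "1 \<le> ln (ln (real P))" using lnP by (subst ln_ge_iff) auto
    moreover have bounds: "c1 * (real P / ln (real P)) \<le> real (M P)" "real (M P) \<le> c2 * (real P / ln (real P))"
      using elim lnP P by auto
    moreover have "c2 * (real P / ln (real P)) \<le> real P / 2"
      using elim lnP P c2 by (simp add: field_simps mult_left_mono)
    then have "2 * real (M P) \<le> real P" using bounds(2) by linarith
    ultimately show ?case using lnP by blast
  qed
  then show ?thesis using c1 c2 that by blast
qed

theorem theorem4:
  fixes mu :: real and M :: "nat \<Rightarrow> nat"
  assumes mu_pos: "mu > 0"
    and M_even_pos: "\<forall>P. even (M P) \<and> M P > 0"
    and M_scaling: "(\<lambda>P. real (M P)) \<in> \<Theta>(\<lambda>P. real P / ln (real P))"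
  shows
    "(\<exists>C. \<forall>\<^sub>F P in at_top. \<forall>N::nat. N > 0 \<longrightarrow>
         P dvd N * (P - (P - M P div 2) + M P) \<longrightarrow>
         E_SD mu (M P) (P - M P div 2) P N / real N \<le> C * (ln (ln (real P)) / ln (real P)))
     \<and> (\<exists>c>0. \<forall>\<^sub>F P in at_top. \<forall>N::nat. N > 0 \<longrightarrow>
         E_MDS mu (M P) P N / real N \<ge> c)
     \<and> (\<exists>c>0. \<forall>\<^sub>F P in at_top. \<forall>N::nat. \<forall>asg. N > 0 \<longrightarrow> valid_rows (M P) P asg \<longrightarrow>
         E_Rep mu (M P) P N asg / real N \<ge> c)
     \<and> (\<exists>c>0. \<forall>\<^sub>F P in at_top. \<forall>N::nat. \<forall>asg. N > 0 \<longrightarrow> valid_rows (M P) P asg \<longrightarrow>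
         (\<forall>i<M P. row_count P asg i dvd N) \<longrightarrow>
         E_UC mu P N asg / real N \<ge> c)"
proof -
  obtain c1 c2 where c: "c1 > 0" "c2 > 0" and bounds:
    "\<forall>\<^sub>F P in at_top. 0 < ln (real P) \<and> 1 \<le> ln (ln (real P)) \<and> 2 * real (M P) \<le> real P \<and>
       c1 * (real P / ln (real P)) \<le> real (M P) \<and> real (M P) \<le> c2 * (real P / ln (real P))"
    using eventually_scaling_bounds[OF M_scaling] by blast
  have M: "even (M P)" "1 \<le> M P" for P using M_even_pos by (auto simp: Suc_le_eq)
  have M_le: "M P \<le> P" if "2 * real (M P) \<le> real P" for P using that by linarith
  have SD: "\<forall>\<^sub>F P in at_top. \<forall>N. N > 0 \<longrightarrow> P dvd N * (P - (P - M P div 2) + M P) \<longrightarrow>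
      E_SD mu (M P) (P - M P div 2) P N / real N
        \<le> 3 / 2 * c2 * (1 + (\<bar>ln (2 / c1)\<bar> + 3) / mu) * (ln (ln (real P)) / ln (real P))"
    using bounds by eventually_elim (use E_SD_ratio_le[OF mu_pos _ c M] in blast)
  have MDS: "\<forall>\<^sub>F P in at_top. \<forall>N. N > 0 \<longrightarrow> E_MDS mu (M P) P N / real N \<ge> 1"
    using bounds by eventually_elim (auto simp: le_divide_eq_1_pos intro!: E_MDS_ge[OF mu_pos _ M(2)] M_le)
  have Rep: "\<forall>\<^sub>F P in at_top. \<forall>N asg. N > 0 \<longrightarrow> valid_rows (M P) P asg \<longrightarrow>
      E_Rep mu (M P) P N asg / real N \<ge> 1"
    using bounds by eventually_elim (auto simp: le_divide_eq_1_pos intro!: E_Rep_ge[OF mu_pos _ _ M(2)] M_le)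
  have UC: "\<forall>\<^sub>F P in at_top. \<forall>N asg. N > 0 \<longrightarrow> valid_rows (M P) P asg \<longrightarrow>
      (\<forall>i<M P. row_count P asg i dvd N) \<longrightarrow> E_UC mu P N asg / real N \<ge> c1 / (4 * mu)"
    using bounds by eventually_elim (use E_UC_ratio_ge[OF mu_pos _ _ M(2)] in blast)
  moreover have "c1 / (4 * mu) > 0" using c mu_pos by simp
  ultimately show ?thesis using SD MDS Rep zero_less_one by (intro conjI) blast+
qed

end
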